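(* Let $f^+,f^-:[0,1]\to[0,1]$ with $f^+(0)=0$ and let $\alpha>0$. If $ALG(uvw)\le\alpha\,LP(uvw)$ for every $(+,-,-)$-triangle whose edge lengths lie in $[0,1]$ and satisfy the triangle inequalities, then $f^-(x)\ge\sqrt{1-\alpha(1-x)}$ for every $x\in[0,1]$ with $1-\alpha(1-x)\ge 0$.
   Context: A triangle $uvw$ has pairs $uv,vw,uw$, each a positive ($+$) or negative ($-$) edge with a length $x_e\in[0,1]$; triangle inequalities: each length is at most the sum of the other two. Let $p_e=f^+(x_e)$ for positive and $p_e=f^-(x_e)$ for negative edges. For a pair $(u,v)$ with third vertex $w$: $e.cost_w(u,v)=p_{uw}(1-p_{vw})+(1-p_{uw})p_{vw}$ if $(u,v)$ is positive, $(1-p_{uw})(1-p_{vw})$ if negative; $e.lp_w(u,v)=(1-p_{uw}p_{vw})x_{uv}$ if positive, $(1-p_{uw}p_{vw})(1-x_{uv})$ if negative. $ALG(uvw)=e.cost_w(u,v)+e.cost_v(w,u)+e.cost_u(v,w)$, $LP(uvw)=e.lp_w(u,v)+e.lp_v(w,u)+e.lp_u(v,w)$. A $(+,-,-)$-triangle has one positive and two negative edges. *)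

theory Defs
  imports Complex_Main
begin

text \<open>Sign of an edge: True = positive, False = negative.\<close>

definition pval :: "(real \<Rightarrow> real) \<Rightarrow> (real \<Rightarrow> real) \<Rightarrow> bool \<Rightarrow> real \<Rightarrow> real" where
  "pval fp fm s x = (if s then fp x else fm x)"

text \<open>e.cost_w(u,v): s, x are sign/length of uv; p1 = p_uw, p2 = p_vw.\<close>
definition ecost :: "bool \<Rightarrow> real \<Rightarrow> real \<Rightarrow> real" where
  "ecost s p1 p2 = (if s then p1 * (1 - p2) + (1 - p1) * p2 else (1 - p1) * (1 - p2))"

definition elp :: "bool \<Rightarrow> real \<Rightarrow> real \<Rightarrow> real \<Rightarrow> real" where
  "elp s x p1 p2 = (if s then (1 - p1 * p2) * x else (1 - p1 * p2) * (1 - x))"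

definition ALG :: "(real \<Rightarrow> real) \<Rightarrow> (real \<Rightarrow> real) \<Rightarrow> bool \<Rightarrow> real \<Rightarrow> bool \<Rightarrow> real \<Rightarrow> bool \<Rightarrow> real \<Rightarrow> real" where
  "ALG fp fm suv xuv svw xvw suw xuw =
     (let puv = pval fp fm suv xuv; pvw = pval fp fm svw xvw; puw = pval fp fm suw xuw in
      ecost suv puw pvw + ecost suw pvw puv + ecost svw puv puw)"

definition LP :: "(real \<Rightarrow> real) \<Rightarrow> (real \<Rightarrow> real) \<Rightarrow> bool \<Rightarrow> real \<Rightarrow> bool \<Rightarrow> real \<Rightarrow> bool \<Rightarrow> real \<Rightarrow> real" where
  "LP fp fm suv xuv svw xvw suw xuw =
     (let puv = pval fp fm suv xuv; pvw = pval fp fm svw xvw; puw = pval fp fm suw xuw in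
      elp suv xuv puw pvw + elp suw xuw pvw puv + elp svw xvw puv puw)"

definition tri_ineq :: "real \<Rightarrow> real \<Rightarrow> real \<Rightarrow> bool" where
  "tri_ineq a b c \<longleftrightarrow> a \<le> b + c \<and> b \<le> a + c \<and> c \<le> a + b"

end

theory Submission
  imports Defs
begin

text \<open>It suffices to test the degenerate \<open>(+,-,-)\<close>-triangle whose positive edge has length 0
  and whose two negative edges have length \<open>x\<close>. Since \<open>f\<^sup>+(0) = 0\<close>, writing \<open>q = f\<^sup>-(x)\<close> one
  finds \<open>ALG = 2 - 2q\<^sup>2\<close> and \<open>LP = 2(1 - x)\<close>, so the hypothesis gives \<open>q\<^sup>2 \<ge> 1 - \<alpha>(1 - x)\<close>.\<close>

lemma tri_ineq_degenerate: "0 \<le> x \<Longrightarrow> tri_ineq 0 x x"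
  by (simp add: tri_ineq_def)

lemma ALG_degenerate_pos_neg_neg:
  fixes fp fm :: "real \<Rightarrow> real"
  assumes "fp 0 = 0"
  shows "ALG fp fm True 0 False x False x = 2 - 2 * (fm x)\<^sup>2"
  using assms by (simp add: ALG_def pval_def ecost_def Let_def power2_eq_square algebra_simps)

lemma LP_degenerate_pos_neg_neg:
  fixes fp fm :: "real \<Rightarrow> real"
  assumes "fp 0 = 0"
  shows "LP fp fm True 0 False x False x = 2 * (1 - x)"
  using assms by (simp add: LP_def pval_def elp_def)

theorem corollary1:
  fixes fp fm :: "real \<Rightarrow> real" and \<alpha> :: real
  assumes fp_range: "\<forall>x\<in>{0..1}. fp x \<in> {0..1}"
    and fm_range: "\<forall>x\<in>{0..1}. fm x \<in> {0..1}"
    and fp0: "fp 0 = 0"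
    and alpha_pos: "\<alpha> > 0"
    and hyp: "\<forall>xuv xvw xuw. xuv \<in> {0..1} \<and> xvw \<in> {0..1} \<and> xuw \<in> {0..1}
               \<and> tri_ineq xuv xvw xuw \<longrightarrow>
               ALG fp fm True xuv False xvw False xuw \<le> \<alpha> * LP fp fm True xuv False xvw False xuw"
  shows "\<forall>x\<in>{0..1}. 1 - \<alpha> * (1 - x) \<ge> 0 \<longrightarrow> fm x \<ge> sqrt (1 - \<alpha> * (1 - x))"
proof (intro ballI impI)
  fix x :: real
  assume x: "x \<in> {0..1}" and "1 - \<alpha> * (1 - x) \<ge> 0"
  have "ALG fp fm True 0 False x False x \<le> \<alpha> * LP fp fm True 0 False x False x"
    using hyp x tri_ineq_degenerate by auto
  then have "2 - 2 * (fm x)\<^sup>2 \<le> \<alpha> * (2 * (1 - x))"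
    by (simp only: ALG_degenerate_pos_neg_neg[of fp fm x, OF fp0] LP_degenerate_pos_neg_neg[of fp fm x, OF fp0])
  then have "sqrt (1 - \<alpha> * (1 - x)) \<le> sqrt ((fm x)\<^sup>2)"
    by (intro real_sqrt_le_mono) (simp add: algebra_simps)
  also have "\<dots> = fm x"
    using fm_range x by simp
  finally show "fm x \<ge> sqrt (1 - \<alpha> * (1 - x))" .
qed

end
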